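(* Let $X$ be a finite connected simplicial complex and $\delta$ a cellular perversity, with $\ge$ denoting the order of $\Lambda(X,\delta)$. (a) If $\Delta\leftrightarrow\Delta'$ and $\delta(\Delta)\ge\delta(\Delta')$, then $\Delta\ge\Delta'$; moreover a defining sequence $\Delta=\Delta_0,\dots,\Delta_r=\Delta'$ can be chosen with $\Delta\leftrightarrow\Delta_i\leftrightarrow\Delta'$ for all $i$. (b) If $\Delta\ge\Delta'$ and either $\delta(\Delta)\ge\delta(\Delta')\ge0$ or $0\ge\delta(\Delta)\ge\delta(\Delta')$, then $\Delta\leftrightarrow\Delta'$. (c) If $\Delta>\Delta'$ and $\Delta$, $\Delta'$ are not incident, then $\delta(\Delta)>0$ and $\delta(\Delta')<0$; if moreover $\delta(\Delta)-\delta(\Delta')=2$, then $\delta(\Delta)=1$ and $\delta(\Delta')=-1$.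
   Context: Simplices of $X$ are open; $\Delta\leftrightarrow\Delta'$ (incident) means one is a face of the other. A cellular perversity is $\delta:\mathbb Z_{\ge0}\to\mathbb Z$ with $\delta(0)=0$ mapping every $\{0,\dots,k\}$ bijectively onto an interval $\{a,\dots,a+k\}$, $a\le0$; $\delta(\Delta):=\delta(\dim\Delta)$. $\Lambda(X,\delta)$ is the set of simplices of $X$ ordered by: $\Delta\ge\Delta'$ iff there is a sequence $\Delta=\Delta_0,\Delta_1,\dots,\Delta_r=\Delta'$ ($r\ge0$) with $\Delta_i\leftrightarrow\Delta_{i+1}$ and $\delta(\Delta_i)=\delta(\Delta_{i+1})+1$ for all $0\le i\le r-1$. *)

theory Defs
  imports Main
begin

definition simplicial_complex :: "'v set set \<Rightarrow> bool" where
  "simplicial_complex X \<longleftrightarrow>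
     (\<forall>s\<in>X. finite s \<and> s \<noteq> {}) \<and>
     (\<forall>s\<in>X. \<forall>t. t \<subseteq> s \<and> t \<noteq> {} \<longrightarrow> t \<in> X)"

definition finite_complex :: "'v set set \<Rightarrow> bool" where
  "finite_complex X \<longleftrightarrow> simplicial_complex X \<and> finite X"

definition connected_complex :: "'v set set \<Rightarrow> bool" where
  "connected_complex X \<longleftrightarrow> X \<noteq> {} \<and>
     (\<forall>u\<in>\<Union>X. \<forall>v\<in>\<Union>X. (\<lambda>a b. {a, b} \<in> X)\<^sup>*\<^sup>* u v)"

definition sdim :: "'v set \<Rightarrow> nat" where
  "sdim s = card s - 1"

definition incident :: "'v set \<Rightarrow> 'v set \<Rightarrow> bool" where
  "incident s t \<longleftrightarrow> s \<subseteq> t \<or> t \<subseteq> s"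

definition cellular_perversity :: "(nat \<Rightarrow> int) \<Rightarrow> bool" where
  "cellular_perversity \<delta> \<longleftrightarrow> \<delta> 0 = 0 \<and>
     (\<forall>k. \<exists>a\<le>0. bij_betw \<delta> {0..k} {a..a + int k})"

definition pval :: "(nat \<Rightarrow> int) \<Rightarrow> 'v set \<Rightarrow> int" where
  "pval \<delta> s = \<delta> (sdim s)"

definition lam_chain :: "'v set set \<Rightarrow> (nat \<Rightarrow> int) \<Rightarrow> 'v set list \<Rightarrow> bool" where
  "lam_chain X \<delta> xs \<longleftrightarrow> xs \<noteq> [] \<and> set xs \<subseteq> X \<and>
     (\<forall>i. Suc i < length xs \<longrightarrow>
        incident (xs ! i) (xs ! Suc i) \<and> pval \<delta> (xs ! i) = pval \<delta> (xs ! Suc i) + 1)"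

definition lam_ge :: "'v set set \<Rightarrow> (nat \<Rightarrow> int) \<Rightarrow> 'v set \<Rightarrow> 'v set \<Rightarrow> bool" where
  "lam_ge X \<delta> s t \<longleftrightarrow> (\<exists>xs. lam_chain X \<delta> xs \<and> hd xs = s \<and> last xs = t)"

definition lam_gt :: "'v set set \<Rightarrow> (nat \<Rightarrow> int) \<Rightarrow> 'v set \<Rightarrow> 'v set \<Rightarrow> bool" where
  "lam_gt X \<delta> s t \<longleftrightarrow> lam_ge X \<delta> s t \<and> s \<noteq> t"

end

theory Submission
  imports Defs
begin

text \<open>
  Two properties of a cellular perversity drive everything: \<open>\<delta>\<close> is injective and
  maps every \<open>{0..k}\<close> onto an integer interval, and since \<open>\<delta> 0 = 0\<close> a dimension whose
  value lies between \<open>0\<close> and \<open>\<delta> k\<close> is at most \<open>k\<close>.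

  (a) Incident simplices lie on a common flag from \<open>s \<inter> t\<close> to \<open>s \<union> t\<close>; the
  perversity values from \<open>\<delta>(s)\<close> down to \<open>\<delta>(t)\<close> are attained by dimensions
  in this flag, so walking down the values one by one gives the chain.

  (b) In a step \<open>a, b\<close> of a chain with \<open>\<delta>(b) \<ge> 0\<close>, the value \<open>\<delta>(b) = \<delta>(a) - 1\<close> lies
  between \<open>0\<close> and \<open>\<delta>(a)\<close>, so \<open>b\<close> has smaller dimension and, being incident to \<open>a\<close>,
  is a face of it. A chain whose values stay nonnegative is therefore a descending
  sequence of faces, and dually for nonpositive values. (c) is the contrapositive of (b).
\<close>

lemma cellular_perversity_inj:
  assumes "cellular_perversity \<delta>"
  shows "inj \<delta>"
proof (rule injI)
  fix j k assume "\<delta> j = \<delta> k"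
  obtain a where "bij_betw \<delta> {0..max j k} {a..a + int (max j k)}"
    using assms unfolding cellular_perversity_def by blast
  then have "inj_on \<delta> {0..max j k}" by (rule bij_betw_imp_inj_on)
  with \<open>\<delta> j = \<delta> k\<close> show "j = k" by (auto dest: inj_onD)
qed

lemma cellular_perversity_intermediate_value:
  assumes "cellular_perversity \<delta>" "\<delta> j \<le> v" "v \<le> \<delta> k"
  obtains d where "d \<le> max j k" "\<delta> d = v"
proof -
  obtain a where "bij_betw \<delta> {0..max j k} {a..a + int (max j k)}"
    using assms(1) unfolding cellular_perversity_def by blast
  then have image: "\<delta> ` {0..max j k} = {a..a + int (max j k)}"
    by (rule bij_betw_imp_surj_on)
  then have "\<delta> j \<in> {a..a + int (max j k)}" "\<delta> k \<in> {a..a + int (max j k)}"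
    by auto
  with assms(2,3) have "v \<in> \<delta> ` {0..max j k}"
    unfolding image by auto
  then show thesis using that by auto
qed

lemma cellular_perversity_le_if_between_zero:
  assumes "cellular_perversity \<delta>" "min 0 (\<delta> j) \<le> \<delta> k" "\<delta> k \<le> max 0 (\<delta> j)"
  shows "k \<le> j"
proof -
  have "\<delta> 0 = 0" using assms(1) unfolding cellular_perversity_def by blast
  with assms obtain d where "d \<le> j" "\<delta> d = \<delta> k"
    using cellular_perversity_intermediate_value[OF assms(1), of 0 "\<delta> k" j]
      cellular_perversity_intermediate_value[OF assms(1), of j "\<delta> k" 0]
    by (cases "0 \<le> \<delta> j") auto
  with cellular_perversity_inj[OF assms(1)] show "k \<le> j"
    by (auto dest: injD)
qed

lemma simplicial_complexD:
  assumes "simplicial_complex X" "s \<in> X"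
  shows "finite s" "s \<noteq> {}" "\<And>t. t \<subseteq> s \<Longrightarrow> t \<noteq> {} \<Longrightarrow> t \<in> X"
  using assms unfolding simplicial_complex_def by blast+

lemma incident_commute: "incident s t \<longleftrightarrow> incident t s"
  by (auto simp: incident_def)

lemma successively_rtranclp_hd_last:
  assumes "successively R xs" "u \<in> set xs"
  shows "R\<^sup>*\<^sup>* (hd xs) u \<and> R\<^sup>*\<^sup>* u (last xs)"
  using assms
proof (induction R xs arbitrary: u rule: successively.induct)
  case (3 R x y xs)
  then show ?case
    by (auto intro: converse_rtranclp_into_rtranclp)
qed auto

lemma lam_chain_iff_successively:
  "lam_chain X \<delta> xs \<longleftrightarrow> xs \<noteq> [] \<and> set xs \<subseteq> X \<and>
     successively (\<lambda>a b. incident a b \<and> pval \<delta> a = pval \<delta> b + 1) xs"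
  by (simp add: lam_chain_def successively_conv_nth)

lemma lam_chain_pval_bounds:
  assumes "lam_chain X \<delta> xs" "u \<in> set xs"
  shows "pval \<delta> (last xs) \<le> pval \<delta> u \<and> pval \<delta> u \<le> pval \<delta> (hd xs)"
proof -
  have "xs \<noteq> []" using assms(1) by (simp add: lam_chain_def)
  have "successively (\<ge>) (map (pval \<delta>) xs)"
    using assms(1) unfolding lam_chain_iff_successively successively_map
    by (auto elim: successively_mono)
  from successively_rtranclp_hd_last[OF this, of "pval \<delta> u"] assms(2) \<open>xs \<noteq> []\<close>
  show ?thesis by (simp add: hd_map last_map)
qed

lemma subset_if_incident_pval_between_zero:
  assumes "cellular_perversity \<delta>" "finite t" "incident s t" "pval \<delta> s \<noteq> pval \<delta> t"
    and "min 0 (pval \<delta> s) \<le> pval \<delta> t" "pval \<delta> t \<le> max 0 (pval \<delta> s)"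
  shows "t \<subseteq> s"
proof -
  have "sdim t \<le> sdim s"
    using cellular_perversity_le_if_between_zero[OF assms(1)] assms(5,6)
    unfolding pval_def by blast
  moreover have "sdim t \<noteq> sdim s" using assms(4) unfolding pval_def by auto
  ultimately have "card t < card s" unfolding sdim_def by linarith
  then show "t \<subseteq> s"
    using assms(3) card_mono[OF assms(2), of s] unfolding incident_def by auto
qed

lemma lam_chain_last_subset_hd:
  assumes "simplicial_complex X" "cellular_perversity \<delta>" "lam_chain X \<delta> xs"
    and "0 \<le> pval \<delta> (last xs)"
  shows "last xs \<subseteq> hd xs"
proof -
  have "set xs \<subseteq> X" using assms(3) by (simp add: lam_chain_def)
  have "successively (\<lambda>a b. incident a b \<and> pval \<delta> a = pval \<delta> b + 1) xs"
    using assms(3) by (simp add: lam_chain_iff_successively)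
  then have "successively (\<supseteq>) xs"
  proof (rule successively_mono)
    fix a b assume "a \<in> set xs" "b \<in> set xs"
      and step: "incident a b \<and> pval \<delta> a = pval \<delta> b + 1"
    have "0 \<le> pval \<delta> b"
      using lam_chain_pval_bounds[OF assms(3) \<open>b \<in> set xs\<close>] assms(4) by linarith
    moreover have "finite b"
      using simplicial_complexD(1)[OF assms(1)] \<open>set xs \<subseteq> X\<close> \<open>b \<in> set xs\<close> by blast
    ultimately show "b \<subseteq> a"
      using step by (intro subset_if_incident_pval_between_zero[OF assms(2)]) auto
  qed
  moreover have "hd xs \<in> set xs" using assms(3) by (simp add: lam_chain_def)
  ultimately show ?thesis using successively_rtranclp_hd_last by fastforce
qed

lemma lam_chain_hd_subset_last:
  assumes "simplicial_complex X" "cellular_perversity \<delta>" "lam_chain X \<delta> xs"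
    and "pval \<delta> (hd xs) \<le> 0"
  shows "hd xs \<subseteq> last xs"
proof -
  have "set xs \<subseteq> X" using assms(3) by (simp add: lam_chain_def)
  have "successively (\<lambda>a b. incident a b \<and> pval \<delta> a = pval \<delta> b + 1) xs"
    using assms(3) by (simp add: lam_chain_iff_successively)
  then have "successively (\<subseteq>) xs"
  proof (rule successively_mono)
    fix a b assume "a \<in> set xs" "b \<in> set xs"
      and step: "incident a b \<and> pval \<delta> a = pval \<delta> b + 1"
    have "pval \<delta> a \<le> 0"
      using lam_chain_pval_bounds[OF assms(3) \<open>a \<in> set xs\<close>] assms(4) by linarith
    moreover have "finite a"
      using simplicial_complexD(1)[OF assms(1)] \<open>set xs \<subseteq> X\<close> \<open>a \<in> set xs\<close> by blast
    ultimately show "a \<subseteq> b"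
      using step by (intro subset_if_incident_pval_between_zero[OF assms(2)])
        (auto simp: incident_commute)
  qed
  moreover have "hd xs \<in> set xs" using assms(3) by (simp add: lam_chain_def)
  ultimately show ?thesis using successively_rtranclp_hd_last by fastforce
qed

lemma exists_flag:
  assumes "finite B" "A \<subseteq> B" "A \<noteq> {}"
  obtains F :: "nat \<Rightarrow> 'a set"
  where "mono F" "\<And>d. F d \<subseteq> B" "\<And>d. d < card B \<Longrightarrow> card (F d) = Suc d"
    and "F (sdim A) = A" "F (sdim B) = B"
proof -
  have "finite A" using assms(1,2) by (rule finite_subset[rotated])
  obtain as where as: "set as = A" "distinct as"
    using finite_distinct_list[OF \<open>finite A\<close>] by blast
  obtain bs where bs: "set bs = B - A" "distinct bs"
    using finite_distinct_list[of "B - A"] assms(1) by blast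
  define L where "L = as @ bs"
  have L: "distinct L" "set L = B"
    using as bs assms(2) unfolding L_def by auto
  then have "length L = card B" by (metis distinct_card)
  define F where "F d = set (take (Suc d) L)" for d
  show thesis
  proof
    show "mono F"
      unfolding F_def by (intro monoI set_take_subset_set_take) simp
    show "F d \<subseteq> B" for d
      unfolding F_def using L(2) set_take_subset by metis
    show "card (F d) = Suc d" if "d < card B" for d
      unfolding F_def using L \<open>length L = card B\<close> that by (simp add: distinct_card)
    have "length as = card A" "card A \<ge> 1"
      using as distinct_card \<open>finite A\<close> assms(3) by (fastforce simp: Suc_le_eq card_gt_0_iff)+
    then show "F (sdim A) = A"
      unfolding F_def L_def sdim_def using as by simp
    have "card A \<le> card B" using card_mono[OF assms(1,2)] .
    with \<open>card A \<ge> 1\<close> show "F (sdim B) = B"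
      unfolding F_def sdim_def using L \<open>length L = card B\<close> by simp
  qed
qed

lemma lam_chain_map_upt:
  assumes "\<And>i. i \<le> n \<Longrightarrow> g i \<in> X" "\<And>i. i < n \<Longrightarrow> incident (g i) (g (Suc i))"
    and "\<And>i. i \<le> n \<Longrightarrow> pval \<delta> (g i) = c - int i"
  shows "lam_chain X \<delta> (map g [0..<Suc n])"
  unfolding lam_chain_def
proof (intro conjI allI impI)
  show "set (map g [0..<Suc n]) \<subseteq> X" using assms(1) by auto
  fix i assume "Suc i < length (map g [0..<Suc n])"
  then have "i < n" by simp
  then show "incident (map g [0..<Suc n] ! i) (map g [0..<Suc n] ! Suc i)"
    and "pval \<delta> (map g [0..<Suc n] ! i) = pval \<delta> (map g [0..<Suc n] ! Suc i) + 1"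
    using assms(2,3) by (simp_all del: upt_Suc add: nth_map_upt)
qed simp

lemma lam_chain_between_incident:
  assumes "simplicial_complex X" "cellular_perversity \<delta>" "s \<in> X" "t \<in> X"
    and "incident s t" "pval \<delta> t \<le> pval \<delta> s"
  obtains xs where "lam_chain X \<delta> xs" "hd xs = s" "last xs = t"
    and "\<forall>u\<in>set xs. incident s u \<and> incident u t"
proof -
  define A B where "A = s \<inter> t" and "B = s \<union> t"
  have AB: "A = s \<and> B = t \<or> A = t \<and> B = s"
    using assms(5) unfolding A_def B_def incident_def by blast
  then have "B \<in> X" "A \<subseteq> B" "A \<noteq> {}"
    using assms(3,4) simplicial_complexD(2)[OF assms(1)] unfolding A_def B_def by auto
  note B = simplicial_complexD[OF assms(1) \<open>B \<in> X\<close>]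
  obtain F where F: "mono F" "\<And>d. F d \<subseteq> B" "\<And>d. d < card B \<Longrightarrow> card (F d) = Suc d"
    "F (sdim A) = A" "F (sdim B) = B"
    using exists_flag[OF B(1) \<open>A \<subseteq> B\<close> \<open>A \<noteq> {}\<close>] by blast
  have F_simplex: "F d \<in> X" "sdim (F d) = d" if "d \<le> sdim B" for d
  proof -
    have "card B \<ge> 1" using B(1,2) by (simp add: Suc_le_eq card_gt_0_iff)
    with that have "card (F d) = Suc d" using F(3) unfolding sdim_def by simp
    then show "sdim (F d) = d" by (simp add: sdim_def)
    from \<open>card (F d) = Suc d\<close> have "F d \<noteq> {}" by auto
    with B(3) F(2) show "F d \<in> X" by blast
  qed
  have F_incident: "incident (F d) (F e)" for d e
    using F(1) nat_le_linear[of d e] unfolding incident_def by (auto dest: monoD)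
  have s_F: "F (sdim s) = s" and t_F: "F (sdim t) = t" using AB F(4,5) by auto
  have "sdim s \<le> sdim B" "sdim t \<le> sdim B"
    using AB card_mono[OF B(1) \<open>A \<subseteq> B\<close>] unfolding sdim_def by auto
  define n where "n = nat (pval \<delta> s - pval \<delta> t)"
  define dim where "dim i = inv \<delta> (pval \<delta> s - int i)" for i
  have dim: "dim i \<le> sdim B" "\<delta> (dim i) = pval \<delta> s - int i" if "i \<le> n" for i
  proof -
    have "\<delta> (sdim t) \<le> pval \<delta> s - int i" "pval \<delta> s - int i \<le> \<delta> (sdim s)"
      using that assms(6) unfolding n_def pval_def by auto
    then obtain d where "d \<le> max (sdim t) (sdim s)" "\<delta> d = pval \<delta> s - int i"
      by (rule cellular_perversity_intermediate_value[OF assms(2)])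
    moreover have "dim i = d"
      unfolding dim_def using \<open>\<delta> d = _\<close> inv_f_f[OF cellular_perversity_inj[OF assms(2)]] by metis
    ultimately show "dim i \<le> sdim B" "\<delta> (dim i) = pval \<delta> s - int i"
      using \<open>sdim s \<le> sdim B\<close> \<open>sdim t \<le> sdim B\<close> by auto
  qed
  have dim_0: "dim 0 = sdim s" and dim_n: "dim n = sdim t"
    unfolding dim_def n_def
    using assms(6) inv_f_f[OF cellular_perversity_inj[OF assms(2)]] by (simp_all add: pval_def)
  let ?xs = "map (\<lambda>i. F (dim i)) [0..<Suc n]"
  show thesis
  proof
    show "lam_chain X \<delta> ?xs"
      using dim F_simplex F_incident by (intro lam_chain_map_upt) (auto simp: pval_def)
    show "hd ?xs = s" "last ?xs = t"
      using dim_0 dim_n s_F t_F by (simp_all add: hd_map last_map del: upt_Suc)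
    show "\<forall>u\<in>set ?xs. incident s u \<and> incident u t"
      using F_incident[of "sdim s"] F_incident[of _ "sdim t"] s_F t_F by auto
  qed
qed

lemma lam_ge_imp_incident:
  assumes "simplicial_complex X" "cellular_perversity \<delta>" "lam_ge X \<delta> s t"
    and "0 \<le> pval \<delta> t \<or> pval \<delta> s \<le> 0"
  shows "incident s t"
  using assms lam_chain_last_subset_hd[OF assms(1,2)] lam_chain_hd_subset_last[OF assms(1,2)]
  unfolding lam_ge_def incident_def by blast

theorem lemma1p2p3:
  fixes X :: "'v set set" and \<delta> :: "nat \<Rightarrow> int"
  assumes "finite_complex X" and "connected_complex X" and "cellular_perversity \<delta>"
  shows "(\<forall>s\<in>X. \<forall>t\<in>X. incident s t \<and> pval \<delta> s \<ge> pval \<delta> t \<longrightarrow>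
            lam_ge X \<delta> s t \<and>
            (\<exists>xs. lam_chain X \<delta> xs \<and> hd xs = s \<and> last xs = t \<and>
                  (\<forall>u\<in>set xs. incident s u \<and> incident u t)))
       \<and> (\<forall>s\<in>X. \<forall>t\<in>X. lam_ge X \<delta> s t \<and>
            (pval \<delta> s \<ge> pval \<delta> t \<and> pval \<delta> t \<ge> 0 \<or> 0 \<ge> pval \<delta> s \<and> pval \<delta> s \<ge> pval \<delta> t)
            \<longrightarrow> incident s t)
       \<and> (\<forall>s\<in>X. \<forall>t\<in>X. lam_gt X \<delta> s t \<and> \<not> incident s t \<longrightarrow>
            pval \<delta> s > 0 \<and> pval \<delta> t < 0 \<and>
            (pval \<delta> s - pval \<delta> t = 2 \<longrightarrow> pval \<delta> s = 1 \<and> pval \<delta> t = -1))"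
proof (intro conjI ballI impI)
  have X: "simplicial_complex X" using assms(1) by (simp add: finite_complex_def)
  note P = assms(3)
  fix s t
  assume "s \<in> X" "t \<in> X"
  {
    assume "incident s t \<and> pval \<delta> s \<ge> pval \<delta> t"
    then obtain xs where "lam_chain X \<delta> xs" "hd xs = s" "last xs = t"
      and "\<forall>u\<in>set xs. incident s u \<and> incident u t"
      using lam_chain_between_incident[OF X P \<open>s \<in> X\<close> \<open>t \<in> X\<close>] by blast
    then show "lam_ge X \<delta> s t"
      and "\<exists>xs. lam_chain X \<delta> xs \<and> hd xs = s \<and> last xs = t \<and>
                 (\<forall>u\<in>set xs. incident s u \<and> incident u t)"
      by (auto simp: lam_ge_def)
  }
  {
    assume "lam_ge X \<delta> s t \<and>
      (pval \<delta> s \<ge> pval \<delta> t \<and> pval \<delta> t \<ge> 0 \<or> 0 \<ge> pval \<delta> s \<and> pval \<delta> s \<ge> pval \<delta> t)"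
    then show "incident s t" using lam_ge_imp_incident[OF X P] by blast
  }
  assume "lam_gt X \<delta> s t \<and> \<not> incident s t"
  then have "lam_ge X \<delta> s t" "\<not> incident s t" by (simp_all add: lam_gt_def)
  then have "pval \<delta> t < 0" "0 < pval \<delta> s"
    using lam_ge_imp_incident[OF X P] by force+
  then show "pval \<delta> s > 0" "pval \<delta> t < 0"
    and "pval \<delta> s - pval \<delta> t = 2 \<Longrightarrow> pval \<delta> s = 1"
    and "pval \<delta> s - pval \<delta> t = 2 \<Longrightarrow> pval \<delta> t = -1"
    by auto
qed

end
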